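(* Let $\mathcal{I}=\langle N,T,\{O_t\}_{t\in[T]},\mathbf{v}\rangle$ be an informed online fair division instance with $T$ rounds and $m$ items in total, in which several items may arrive in the same round. Label the items $o_1,\dots,o_m$ so that whenever $o_j\in O_r$, $o_{j'}\in O_{r'}$ and $r<r'$, we have $j<j'$ (items within a round are ordered arbitrarily), and let $\mathcal{I}^{=1}=\langle N,m,\{\widetilde O_t\}_{t\in[m]},\mathbf{v}\rangle$ be the instance with the same agents and valuations, $m$ rounds, and $\widetilde O_t=\{o_t\}$ for every $t\in[m]$. If a TEF1 allocation exists for $\mathcal{I}^{=1}$, then a TEF1 allocation exists for $\mathcal{I}$.
   Context: An instance $\langle N,T,\{O_t\}_{t\in[T]},\mathbf{v}\rangle$ consists of agents $N=[n]$, and pairwise disjoint sets $O_1,\dots,O_T$ of indivisible items, where $O_t$ is the set of items arriving in round $t$; $O^t=\bigcup_{\ell\le t}O_\ell$ and $O=O^T$. Each agent $i$ has an additive valuation $v_i:2^O\to\mathbb{R}$, $v_i(S)=\sum_{o\in S}v_i(o)$. Either all items are goods ($v_i(o)\ge 0$ for all $i,o$) or all are chores ($v_i(o)\le0$ for all $i,o$). An allocation $\mathcal{A}=(A_1,\dots,A_n)$ is an ordered partition of $O$; for $t\in[T]$, $\mathcal{A}^t=(A_1\cap O^t,\dots,A_n\cap O^t)$. An allocation $(B_1,\dots,B_n)$ is EF1 if for all $i,j\in N$ there is a good $g\in B_j$ with $v_i(B_i)\ge v_i(B_j\setminus\{g\})$ (goods case), resp. a chore $c\in B_i$ with $v_i(B_i\setminus\{c\})\ge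 v_i(B_j)$ (chores case); this holds vacuously-as-true when the relevant bundle is empty and there is no envy (i.e. if $v_i(B_i)\ge v_i(B_j)$). An allocation $\mathcal{A}$ is TEF1 (temporal EF1) if $\mathcal{A}^t$ is EF1 for every $t\in[T]$. *)

theory Defs
  imports Complex_Main
begin

datatype item_kind = Goods | Chores

text \<open>Agents are 1..n, rounds are 1..T, O t is the set of items arriving in round t.\<close>

definition items_upto :: "(nat \<Rightarrow> 'o set) \<Rightarrow> nat \<Rightarrow> 'o set" where
  "items_upto Ob t = (\<Union>l\<in>{1..t}. Ob l)"

definition val :: "(nat \<Rightarrow> 'o \<Rightarrow> real) \<Rightarrow> nat \<Rightarrow> 'o set \<Rightarrow> real" where
  "val v i S = (\<Sum>x\<in>S. v i x)"

definition signs_ok :: "item_kind \<Rightarrow> nat \<Rightarrow> (nat \<Rightarrow> 'o \<Rightarrow> real) \<Rightarrow> 'o set \<Rightarrow> bool" where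
  "signs_ok k n v S = (case k of
      Goods \<Rightarrow> (\<forall>i\<in>{1..n}. \<forall>x\<in>S. v i x \<ge> 0)
    | Chores \<Rightarrow> (\<forall>i\<in>{1..n}. \<forall>x\<in>S. v i x \<le> 0))"

definition is_allocation :: "nat \<Rightarrow> 'o set \<Rightarrow> (nat \<Rightarrow> 'o set) \<Rightarrow> bool" where
  "is_allocation n S A =
     ((\<forall>i\<in>{1..n}. \<forall>j\<in>{1..n}. i \<noteq> j \<longrightarrow> A i \<inter> A j = {}) \<and>
      (\<Union>i\<in>{1..n}. A i) = S)"

definition EF1 :: "item_kind \<Rightarrow> nat \<Rightarrow> (nat \<Rightarrow> 'o \<Rightarrow> real) \<Rightarrow> (nat \<Rightarrow> 'o set) \<Rightarrow> bool" where
  "EF1 k n v B = (\<forall>i\<in>{1..n}. \<forall>j\<in>{1..n}.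
      val v i (B i) \<ge> val v i (B j) \<or>
      (case k of
         Goods \<Rightarrow> (\<exists>g\<in>B j. val v i (B i) \<ge> val v i (B j - {g}))
       | Chores \<Rightarrow> (\<exists>c\<in>B i. val v i (B i - {c}) \<ge> val v i (B j))))"

definition TEF1 :: "item_kind \<Rightarrow> nat \<Rightarrow> (nat \<Rightarrow> 'o \<Rightarrow> real) \<Rightarrow> (nat \<Rightarrow> 'o set) \<Rightarrow> nat
                    \<Rightarrow> (nat \<Rightarrow> 'o set) \<Rightarrow> bool" where
  "TEF1 k n v Ob T A = (\<forall>t\<in>{1..T}. EF1 k n v (\<lambda>i. A i \<inter> items_upto Ob t))"

end

theory Submission
  imports Defs
begin

text \<open>Because labels increase with the rounds, the items that have arrived by round t
  are exactly the items with labels 1, ..., s for some s \<le> m. Hence the allocation of the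
  single-item instance restricted to the items of the first t rounds is its restriction to the
  first s rounds, which is EF1.\<close>

lemma items_upto_singletons: "items_upto (\<lambda>t. {f t}) s = f ` {1..s}"
  unfolding items_upto_def by auto

lemma items_upto_mono: "t \<le> T \<Longrightarrow> items_upto Ob t \<subseteq> items_upto Ob T"
  unfolding items_upto_def by (auto intro!: bexI)

lemma EF1_empty: "EF1 k n v (\<lambda>i. {})"
  unfolding EF1_def val_def by auto

lemma downward_closed_eq_atLeastAtMost:
  fixes J :: "nat set"
  assumes sub: "J \<subseteq> {1..m}"
    and down: "\<And>j j'. j \<in> J \<Longrightarrow> 1 \<le> j' \<Longrightarrow> j' \<le> j \<Longrightarrow> j' \<in> J"
  shows "\<exists>s\<le>m. J = {1..s}"
proof (cases "J = {}")
  case True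
  then show ?thesis by auto
next
  case False
  have fin: "finite J" using sub finite_subset by blast
  then have "Max J \<in> J" using False by simp
  then have "J = {1..Max J}" using fin sub down by (auto intro: Max_ge)
  moreover have "Max J \<le> m" using \<open>Max J \<in> J\<close> sub by auto
  ultimately show ?thesis by blast
qed

lemma items_upto_eq_label_prefix:
  fixes ord :: "nat \<Rightarrow> 'o" and m T t :: nat
  assumes lab_img: "ord ` {1..m} = items_upto Ob T"
    and lab_order: "\<forall>j\<in>{1..m}. \<forall>j'\<in>{1..m}. \<forall>r\<in>{1..T}. \<forall>r'\<in>{1..T}.
                      ord j \<in> Ob r \<longrightarrow> ord j' \<in> Ob r' \<longrightarrow> r < r' \<longrightarrow> j < j'"
    and "t \<le> T"
  shows "\<exists>s\<le>m. items_upto Ob t = ord ` {1..s}"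
proof -
  define J where "J = {j\<in>{1..m}. ord j \<in> items_upto Ob t}"
  have "ord ` J = items_upto Ob t"
    using items_upto_mono[OF \<open>t \<le> T\<close>, of Ob] lab_img unfolding J_def by fastforce
  moreover have "\<exists>s\<le>m. J = {1..s}"
  proof (rule downward_closed_eq_atLeastAtMost)
    fix j j' assume "j \<in> J" "1 \<le> j'" "j' \<le> j"
    then have j: "j \<in> {1..m}" and j': "j' \<in> {1..m}" unfolding J_def by auto
    obtain r where r: "r \<in> {1..t}" "ord j \<in> Ob r"
      using \<open>j \<in> J\<close> unfolding J_def items_upto_def by auto
    have "ord j' \<in> items_upto Ob T"
      using j' lab_img by blast
    then obtain r' where r': "r' \<in> {1..T}" "ord j' \<in> Ob r'"
      unfolding items_upto_def by blast
    have "\<not> t < r'"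
      using lab_order j j' r r' \<open>j' \<le> j\<close> \<open>t \<le> T\<close> by fastforce
    then show "j' \<in> J"
      using j' r' unfolding J_def items_upto_def by auto
  qed (auto simp: J_def)
  ultimately show ?thesis by metis
qed

lemma TEF1_singletons_EF1_prefix:
  assumes "TEF1 k n v (\<lambda>t. {ord t}) m A" and "s \<le> m"
  shows "EF1 k n v (\<lambda>i. A i \<inter> ord ` {1..s})"
proof (cases "s = 0")
  case True
  then show ?thesis using EF1_empty by simp
next
  case False
  then show ?thesis
    using assms unfolding TEF1_def items_upto_singletons by simp
qed

theorem lemma1:
  fixes n T m :: nat
    and Ob :: "nat \<Rightarrow> 'o set"
    and v :: "nat \<Rightarrow> 'o \<Rightarrow> real"
    and k :: item_kind
    and ord :: "nat \<Rightarrow> 'o"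
  assumes disj: "\<forall>t1\<in>{1..T}. \<forall>t2\<in>{1..T}. t1 \<noteq> t2 \<longrightarrow> Ob t1 \<inter> Ob t2 = {}"
    and signs: "signs_ok k n v (items_upto Ob T)"
    and lab_bij: "bij_betw ord {1..m} (items_upto Ob T)"
    and lab_order: "\<forall>j\<in>{1..m}. \<forall>j'\<in>{1..m}. \<forall>r\<in>{1..T}. \<forall>r'\<in>{1..T}.
                      ord j \<in> Ob r \<longrightarrow> ord j' \<in> Ob r' \<longrightarrow> r < r' \<longrightarrow> j < j'"
    and single: "\<exists>A. is_allocation n (items_upto (\<lambda>t. {ord t}) m) A \<and>
                     TEF1 k n v (\<lambda>t. {ord t}) m A"
  shows "\<exists>A. is_allocation n (items_upto Ob T) A \<and> TEF1 k n v Ob T A"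
proof -
  obtain A where alloc: "is_allocation n (items_upto (\<lambda>t. {ord t}) m) A"
    and tef: "TEF1 k n v (\<lambda>t. {ord t}) m A"
    using single by blast
  have lab_img: "ord ` {1..m} = items_upto Ob T"
    using lab_bij by (simp add: bij_betw_def)
  have "EF1 k n v (\<lambda>i. A i \<inter> items_upto Ob t)" if "t \<in> {1..T}" for t
  proof -
    obtain s where "s \<le> m" and "items_upto Ob t = ord ` {1..s}"
      using items_upto_eq_label_prefix[OF lab_img lab_order, of t] \<open>t \<in> {1..T}\<close> by auto
    then show ?thesis using TEF1_singletons_EF1_prefix[OF tef] by simp
  qed
  then have "TEF1 k n v Ob T A"
    unfolding TEF1_def by blast
  moreover have "is_allocation n (items_upto Ob T) A"
    using alloc lab_img by (simp add: items_upto_singletons)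
  ultimately show ?thesis by blast
qed

end
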